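(* The map $V:\mathcal S^{2,2}\to\mathcal S^{2,2}$ has a unique fixed point $p=(1/2,0,1/2,0)$, and there is a neighborhood $\mathcal U(p)\subset\mathcal S^{2,2}$ of $p$, open relative to $\mathcal S^{2,2}$, such that $\lim_{n\to\infty}V^n(s)=p$ for every $s\in\mathcal U(p)$.
   Context: $\mathcal S^{2,2}=\{(x,y,u,v)\in\mathbb{R}^4: x,y,u,v\ge0,\ x+y+u+v=1,\ x+y>0,\ u+v>0\}$. $V:\mathcal S^{2,2}\to\mathcal S^{2,2}$ is $V(x,y,u,v)=(x',y',u',v')$ with $x'=\dfrac{2xu+yu}{4(x+y)(u+v)}$, $y'=\dfrac{6xv+3yu+4yv}{12(x+y)(u+v)}$, $u'=\dfrac{6xu+6xv+3yu+4yv}{12(x+y)(u+v)}$, $v'=\dfrac{3yu+4yv}{12(x+y)(u+v)}$. $V^n$ denotes the $n$-fold iterate. *)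

theory Defs
  imports "HOL-Analysis.Analysis"
begin

type_synonym pt4 = "real \<times> real \<times> real \<times> real"

definition S22 :: "pt4 set" where
  "S22 = {(x,y,u,v). x \<ge> 0 \<and> y \<ge> 0 \<and> u \<ge> 0 \<and> v \<ge> 0 \<and> x + y + u + v = 1
          \<and> x + y > 0 \<and> u + v > 0}"

definition V :: "pt4 \<Rightarrow> pt4" where
  "V = (\<lambda>(x,y,u,v).
     ((2*x*u + y*u) / (4*(x+y)*(u+v)),
      (6*x* v + 3*y*u + 4*y* v) / (12*(x+y)*(u+v)),
      (6*x*u + 6*x* v + 3*y*u + 4*y* v) / (12*(x+y)*(u+v)),
      (3*y*u + 4*y* v) / (12*(x+y)*(u+v))))"

end

theory Submission
  imports Defs
begin

text \<open>Put \<open>a = x + y\<close> and \<open>D = 12 (x + y) (u + v)\<close>. Clearing denominators, the image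
  \<open>(x', y', u', v')\<close> satisfies \<open>(1/2 - a') D = 2 y v\<close> and
  \<open>(y' + v') D = 6 x v + 6 y u + 8 y v\<close>. At a fixed point these two identities force
  \<open>y v = 0\<close>, and then \<open>y = v = 0\<close> and \<open>a = 1/2\<close>.

  For the attraction, one step of \<open>V\<close> maps every point close to \<open>p\<close> into the region
  \<open>y + v \<le> 1/12\<close>, \<open>0 \<le> 1/2 - a \<le> v/6\<close>. This region is invariant; on it \<open>y + v\<close> decreases by
  at least \<open>2/3 y v\<close> per step, while \<open>y' \<ge> y/2\<close> and \<open>y/2 \<le> v' \<le> 2 y\<close>. Hence \<open>y v \<rightarrow> 0\<close>
  along the orbit, so \<open>y, v \<rightarrow> 0\<close>, and \<open>a \<rightarrow> 1/2\<close> is squeezed by \<open>1/2 - v/6 \<le> a \<le> 1/2\<close>.\<close>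

lemma V_cleared:
  fixes x y u v x' y' u' v' :: real
  assumes "(x,y,u,v) \<in> S22" and "V (x,y,u,v) = (x',y',u',v')"
  defines "D \<equiv> 12 * (x+y) * (u+v)"
  shows "D > 0" "x' \<ge> 0" "y' \<ge> 0" "u' \<ge> 0" "v' \<ge> 0"
    "x' * D = 6 * x * u + 3 * y * u" "y' * D = 6 * x * v + 3 * y * u + 4 * y * v"
    "u' * D = 6 * x * u + 6 * x * v + 3 * y * u + 4 * y * v" "v' * D = 3 * y * u + 4 * y * v"
proof -
  have h: "x \<ge> 0" "y \<ge> 0" "u \<ge> 0" "v \<ge> 0" "x + y > 0" "u + v > 0"
    using assms(1) by (auto simp: S22_def)
  then have nz: "x + y \<noteq> 0" "u + v \<noteq> 0" by auto
  have e: "x' = (2 * x * u + y * u) / (4 * (x+y) * (u+v))"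
    "y' = (6 * x * v + 3 * y * u + 4 * y * v) / (12 * (x+y) * (u+v))"
    "u' = (6 * x * u + 6 * x * v + 3 * y * u + 4 * y * v) / (12 * (x+y) * (u+v))"
    "v' = (3 * y * u + 4 * y * v) / (12 * (x+y) * (u+v))"
    using assms(2) by (auto simp: V_def)
  have cancel: "N / (c * A * B) * (12 * A * B) = (12 / c) * N"
    if "A \<noteq> 0" "B \<noteq> 0" "c \<noteq> 0" for N c A B :: real
    using that by (simp add: field_simps)
  show "D > 0" unfolding D_def using h by simp
  show "x' \<ge> 0" "y' \<ge> 0" "u' \<ge> 0" "v' \<ge> 0" unfolding e using h by auto
  show "x' * D = 6 * x * u + 3 * y * u" "y' * D = 6 * x * v + 3 * y * u + 4 * y * v"
    "u' * D = 6 * x * u + 6 * x * v + 3 * y * u + 4 * y * v" "v' * D = 3 * y * u + 4 * y * v"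
    unfolding e D_def by (subst cancel[OF nz]; simp)+
qed

lemma V_cleared_sums:
  fixes x y u v x' y' u' v' :: real
  assumes "(x,y,u,v) \<in> S22" and "V (x,y,u,v) = (x',y',u',v')"
  defines "D \<equiv> 12 * (x+y) * (u+v)"
  shows "x' + y' + u' + v' = 1"
    "(1/2 - (x' + y')) * D = 2 * y * v"
    "(y' + v') * D = 6 * x * v + 6 * y * u + 8 * y * v"
proof -
  note c = V_cleared[OF assms(1,2), folded D_def]
  have "(x' + y' + u' + v') * D = 1 * D"
    unfolding distrib_right c(6-9) unfolding D_def
    by (simp add: algebra_simps)
  then show "x' + y' + u' + v' = 1" using c(1) by simp
  have "(1/2 - (x' + y')) * D = D / 2 - x' * D - y' * D" by (simp add: algebra_simps)
  also have "\<dots> = 2 * y * v" unfolding c(6,7) unfolding D_def by (simp add: algebra_simps)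
  finally show "(1/2 - (x' + y')) * D = 2 * y * v" .
  show "(y' + v') * D = 6 * x * v + 6 * y * u + 8 * y * v"
    unfolding distrib_right c(7,9) by simp
qed

lemma mass_defect_identity:
  fixes x y u v :: real
  assumes "x + y + u + v = 1"
  shows "(y + v) * (12 * (x+y) * (u+v)) - (6 * x * v + 6 * y * u + 8 * y * v)
           = 4 * y * v - 12 * (u+v) * (1/2 - (x+y)) * y + 12 * (x+y) * (1/2 - (x+y)) * v"
proof -
  have u: "u = 1 - x - y - v" using assms by linarith
  show ?thesis unfolding u by (simp add: algebra_simps)
qed

lemma V_fixed_point_unique:
  assumes "s \<in> S22" and "V s = s"
  shows "s = (1/2, 0, 1/2, 0)"
proof -
  obtain x y u v where s: "s = (x,y,u,v)" by (cases s) auto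
  have S: "(x,y,u,v) \<in> S22" and fixed: "V (x,y,u,v) = (x,y,u,v)" using assms unfolding s by simp_all
  have h: "x \<ge> 0" "y \<ge> 0" "u \<ge> 0" "v \<ge> 0" "x + y + u + v = 1" "x + y > 0" "u + v > 0"
    using S by (auto simp: S22_def)
  define a where "a = x + y"
  define b where "b = u + v"
  define D where "D = 12 * a * b"
  define d where "d = 1/2 - a"
  note c = V_cleared[OF S fixed, folded a_def b_def, folded D_def]
  note m = V_cleared_sums[OF S fixed, folded a_def b_def, folded D_def]
  have dD: "d * D = 2 * y * v" using m(2) unfolding d_def a_def .
  have "4 * y * v - 12 * b * d * y + 12 * a * d * v = 0"
    using mass_defect_identity[OF h(5), folded a_def b_def, folded D_def d_def] m(3) by linarith
  then have "0 = (4 * y * v - 12 * b * d * y + 12 * a * d * v) * D" by simp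
  also have "\<dots> = 4 * y * v * D - 12 * b * y * (d * D) + 12 * a * v * (d * D)"
    by (simp add: algebra_simps)
  also have "\<dots> = y * v * (4 * D - 24 * b * y + 24 * a * v)"
    unfolding dD by (simp add: algebra_simps)
  finally have E: "y * v * (4 * D - 24 * b * y + 24 * a * v) = 0" by simp
  have "4 * D - 24 * b * y = 24 * b * (a + x)" unfolding D_def a_def by (simp add: algebra_simps)
  moreover have "24 * b * (a + x) > 0" "24 * a * v \<ge> 0" using h unfolding a_def b_def by simp_all
  ultimately have "4 * D - 24 * b * y + 24 * a * v > 0" by linarith
  with E have yv: "y * v = 0" by simp
  have y0: "y = 0"
  proof (rule ccontr)
    assume "y \<noteq> 0"
    with yv have "v = 0" by simp
    with c(9) h \<open>y \<noteq> 0\<close> show False by simp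
  qed
  then have "v = 0" using c(1,9) by simp
  moreover have "d = 0" using dD y0 c(1) by simp
  ultimately show ?thesis using y0 h(5) unfolding s d_def a_def by auto
qed

definition trap :: "pt4 set" where
  "trap = {(x,y,u,v). x \<ge> 0 \<and> y \<ge> 0 \<and> u \<ge> 0 \<and> v \<ge> 0 \<and> x + y + u + v = 1
             \<and> y + v \<le> 1/12 \<and> x + y \<le> 1/2 \<and> 1/2 - (x + y) \<le> v / 6}"

lemma trap_subset_S22: "trap \<subseteq> S22"
  by (auto simp: trap_def S22_def)

lemma V_in_trap:
  fixes x y u v x' y' u' v' :: real
  assumes S: "(x,y,u,v) \<in> S22" and V: "V (x,y,u,v) = (x',y',u',v')"
    and vu: "8 * v \<le> 3 * u" and mass: "y' + v' \<le> 1/12"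
  shows "(x',y',u',v') \<in> trap"
proof -
  define D where "D = 12 * (x+y) * (u+v)"
  note c = V_cleared[OF S V, folded D_def]
  note m = V_cleared_sums[OF S V, folded D_def]
  have y: "y \<ge> 0" using S by (simp add: S22_def)
  have "(1/2 - (x' + y')) * D \<ge> 0" unfolding m(2) using S by (simp add: S22_def)
  then have "x' + y' \<le> 1/2" using c(1) by (simp add: zero_le_mult_iff)
  moreover have "(1/2 - (x' + y')) * D \<le> (v' / 6) * D"
    unfolding m(2) using c(9) mult_left_mono[OF vu y] by (simp add: algebra_simps)
  then have "1/2 - (x' + y') \<le> v' / 6" using c(1) by simp
  ultimately show ?thesis using c(2-5) m(1) mass by (simp add: trap_def)
qed

lemma trap_mass_decrease:
  fixes x y u v :: real
  assumes "(x,y,u,v) \<in> trap"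
  shows "(y + v) * (12 * (x+y) * (u+v)) - (6 * x * v + 6 * y * u + 8 * y * v)
           \<ge> 2/3 * y * v * (12 * (x+y) * (u+v))"
proof -
  have h: "x \<ge> 0" "y \<ge> 0" "u \<ge> 0" "v \<ge> 0" "x + y + u + v = 1"
      "y + v \<le> 1/12" "x + y \<le> 1/2" "1/2 - (x + y) \<le> v / 6"
    using assms by (auto simp: trap_def)
  define d where "d = 1/2 - (x + y)"
  have d: "0 \<le> d" "d \<le> v / 6" "d \<le> 1/2" using h unfolding d_def by linarith+
  have x: "x = 1/2 - d - y" and u: "u = 1/2 + d - v" using h unfolding d_def by linarith+
  have "(u+v) * d * y \<le> 1 * (v / 6) * y"
    by (rule mult_right_mono[OF mult_mono]) (use d h in auto)
  moreover have "0 \<le> (x+y) * d * v" using d h by simp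
  moreover have "2/3 * y * v * (12 * (x+y) * (u+v)) \<le> 2/3 * y * v * 3"
    by (rule mult_left_mono) (use h in \<open>simp_all add: x u algebra_simps\<close>)
  ultimately show ?thesis
    unfolding mass_defect_identity[OF h(5), folded d_def] by (simp add: algebra_simps)
qed

lemma V_trap:
  fixes x y u v x' y' u' v' :: real
  assumes T: "(x,y,u,v) \<in> trap" and V: "V (x,y,u,v) = (x',y',u',v')"
  shows "(x',y',u',v') \<in> trap" "y' + v' \<le> y + v - 2/3 * y * v"
    "y / 2 \<le> y'" "y / 2 \<le> v'" "v' \<le> 2 * y"
proof -
  have h: "x \<ge> 0" "y \<ge> 0" "u \<ge> 0" "v \<ge> 0" "x + y + u + v = 1"
     "y + v \<le> 1/12" "x + y \<le> 1/2" "1/2 - (x + y) \<le> v / 6"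
    using T by (auto simp: trap_def)
  have S: "(x,y,u,v) \<in> S22" using T trap_subset_S22 by auto
  define D where "D = 12 * (x+y) * (u+v)"
  note c = V_cleared[OF S V, folded D_def]
  note m = V_cleared_sums[OF S V, folded D_def]
  have "(y' + v') * D \<le> (y + v - 2/3 * y * v) * D"
    using m(3) trap_mass_decrease[OF T, folded D_def] by (simp add: algebra_simps)
  then show mass: "y' + v' \<le> y + v - 2/3 * y * v" using c(1) by simp
  have a: "1/6 \<le> x + y" "x + y \<le> 1/2" using h by linarith+
  have lower: "y / 2 * D \<le> 3 * y * u + 4 * y * v"
  proof -
    have "y / 2 * D = y * (u+v) * (6 * (x+y))" unfolding D_def by (simp add: algebra_simps)
    also have "\<dots> \<le> y * (u+v) * 3" by (rule mult_left_mono) (use h a in auto)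
    also have "\<dots> \<le> 3 * y * u + 4 * y * v" using h by (simp add: algebra_simps)
    finally show ?thesis .
  qed
  have upper: "3 * y * u + 4 * y * v \<le> 2 * y * D"
  proof -
    have "3 * y * u + 4 * y * v \<le> y * (u+v) * 4" using h by (simp add: algebra_simps)
    also have "\<dots> \<le> y * (u+v) * (24 * (x+y))" by (rule mult_left_mono) (use h a in auto)
    also have "\<dots> = 2 * y * D" unfolding D_def by (simp add: algebra_simps)
    finally show ?thesis .
  qed
  have "0 \<le> 6 * x * v" using h by simp
  then have "y / 2 * D \<le> y' * D" "y / 2 * D \<le> v' * D" "v' * D \<le> 2 * y * D"
    unfolding c(7,9) using lower upper by linarith+
  then show "y / 2 \<le> y'" "y / 2 \<le> v'" "v' \<le> 2 * y" using c(1) by simp_all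
  have "y * v \<ge> 0" using h by simp
  then show "(x',y',u',v') \<in> trap"
    by (intro V_in_trap[OF S V]) (use mass h in linarith)+
qed

text \<open>The decrements of \<open>y + w\<close> are summable, so \<open>y (n+1) * w (n+1) \<ge> (y n)\<^sup>2 / 4\<close>
  tends to zero.\<close>
lemma coupled_decay_tendsto_zero:
  fixes y w :: "nat \<Rightarrow> real" and c :: real
  assumes c: "c > 0" and y_nonneg: "\<And>n. y n \<ge> 0" and w_nonneg: "\<And>n. w n \<ge> 0"
    and decrease: "\<And>n. y (Suc n) + w (Suc n) \<le> y n + w n - c * y n * w n"
    and y_Suc: "\<And>n. y n / 2 \<le> y (Suc n)"
    and w_Suc: "\<And>n. y n / 2 \<le> w (Suc n)" "\<And>n. w (Suc n) \<le> 2 * y n"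
  shows "y \<longlonglongrightarrow> 0" "w \<longlonglongrightarrow> 0"
proof -
  define S where "S n = y n + w n" for n
  have "decseq S"
  proof (rule decseq_SucI)
    fix n
    have "0 \<le> c * y n * w n" using c y_nonneg w_nonneg by simp
    then show "S (Suc n) \<le> S n" using decrease[of n] unfolding S_def by linarith
  qed
  moreover have "\<forall>n. 0 \<le> S n" using y_nonneg w_nonneg by (simp add: S_def add_nonneg_nonneg)
  ultimately obtain L where "S \<longlonglongrightarrow> L" using decseq_convergent by blast
  then have "(\<lambda>n. 4 / c * (S (Suc n) - S (Suc (Suc n)))) \<longlonglongrightarrow> 4 / c * (L - L)"
    by (intro tendsto_intros LIMSEQ_Suc)
  then have sqrt_gap: "(\<lambda>n. sqrt (4 / c * (S (Suc n) - S (Suc (Suc n))))) \<longlonglongrightarrow> 0"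
    using tendsto_real_sqrt by fastforce
  have y_le: "y n \<le> sqrt (4 / c * (S (Suc n) - S (Suc (Suc n))))" for n
  proof (rule real_le_rsqrt)
    have "y n / 2 * (y n / 2) \<le> y (Suc n) * w (Suc n)"
      by (rule mult_mono) (use y_Suc w_Suc y_nonneg w_nonneg in auto)
    also have "\<dots> \<le> (S (Suc n) - S (Suc (Suc n))) / c"
      using decrease[of "Suc n"] c by (simp add: S_def field_simps)
    finally show "(y n)\<^sup>2 \<le> 4 / c * (S (Suc n) - S (Suc (Suc n)))"
      using c by (simp add: power2_eq_square field_simps)
  qed
  have "eventually (\<lambda>n. 0 \<le> y n) sequentially"
    "eventually (\<lambda>n. y n \<le> sqrt (4 / c * (S (Suc n) - S (Suc (Suc n))))) sequentially"
    by (intro always_eventually allI y_nonneg y_le)+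
  then show y: "y \<longlonglongrightarrow> 0" by (rule tendsto_sandwich[OF _ _ tendsto_const sqrt_gap])
  have "(\<lambda>n. w (Suc n)) \<longlonglongrightarrow> 0"
    by (rule tendsto_sandwich[OF _ _ tendsto_const tendsto_mult_right_zero[OF y, of 2]])
       (use w_nonneg w_Suc in auto)
  then show "w \<longlonglongrightarrow> 0" by (rule LIMSEQ_imp_Suc)
qed

lemma trap_orbit_tendsto:
  assumes "t \<in> trap"
  shows "(\<lambda>n. (V ^^ n) t) \<longlonglongrightarrow> (1/2, 0, 1/2, 0)"
proof -
  define z where "z n = (V ^^ n) t" for n
  define X Y U W where "X n = fst (z n)" and "Y n = fst (snd (z n))"
    and "U n = fst (snd (snd (z n)))" and "W n = snd (snd (snd (z n)))" for n
  have z: "z n = (X n, Y n, U n, W n)" for n by (simp add: X_def Y_def U_def W_def)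
  have V_z: "V (X n, Y n, U n, W n) = (X (Suc n), Y (Suc n), U (Suc n), W (Suc n))" for n
    unfolding z[symmetric] z_def by simp
  have trap: "(X n, Y n, U n, W n) \<in> trap" for n
  proof (induction n)
    case 0
    then show ?case using assms z[of 0] by (simp add: z_def)
  next
    case (Suc n)
    then show ?case using V_trap(1)[OF _ V_z] by blast
  qed
  note step = V_trap[OF trap V_z]
  have bounds: "Y n \<ge> 0" "W n \<ge> 0" "X n + Y n + U n + W n = 1"
      "X n + Y n \<le> 1/2" "1/2 - W n / 6 \<le> X n + Y n" for n
    using trap[of n] by (auto simp: trap_def)
  have Y: "Y \<longlonglongrightarrow> 0" and W: "W \<longlonglongrightarrow> 0"
    by (rule coupled_decay_tendsto_zero[of "2/3" Y W]; use step bounds in simp)+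
  have "(\<lambda>n. 1/2 - W n / 6) \<longlonglongrightarrow> 1/2 - 0 / 6" by (intro tendsto_intros W) simp
  then have low: "(\<lambda>n. 1/2 - W n / 6) \<longlonglongrightarrow> 1/2" by simp
  have "eventually (\<lambda>n. 1/2 - W n / 6 \<le> X n + Y n) sequentially"
    "eventually (\<lambda>n. X n + Y n \<le> 1/2) sequentially"
    by (intro always_eventually allI bounds)+
  then have XY: "(\<lambda>n. X n + Y n) \<longlonglongrightarrow> 1/2" by (rule tendsto_sandwich[OF _ _ low tendsto_const])
  have "(\<lambda>n. (X n + Y n) - Y n) \<longlonglongrightarrow> 1/2 - 0" by (intro tendsto_intros XY Y)
  moreover have "(\<lambda>n. 1 - (X n + Y n) - W n) \<longlonglongrightarrow> 1 - 1/2 - 0" by (intro tendsto_intros XY W)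
  moreover have "U n = 1 - (X n + Y n) - W n" for n using bounds(3)[of n] by simp
  ultimately have "(\<lambda>n. (X n, Y n, U n, W n)) \<longlonglongrightarrow> (1/2, 0, 1/2, 0)"
    by (intro tendsto_Pair Y W) simp_all
  then show ?thesis unfolding z[symmetric] z_def .
qed

lemma V_near_fixed_point_in_trap:
  fixes x y u v :: real
  assumes S: "(x,y,u,v) \<in> S22" and "y + v < 1/100" and "\<bar>x + y - 1/2\<bar> < 1/100"
  shows "V (x,y,u,v) \<in> trap"
proof -
  obtain x' y' u' v' where V: "V (x,y,u,v) = (x',y',u',v')" by (metis prod.exhaust)
  have h: "x \<ge> 0" "y \<ge> 0" "u \<ge> 0" "v \<ge> 0" "x + y + u + v = 1"
    using S by (auto simp: S22_def)
  define D where "D = 12 * (x+y) * (u+v)"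
  note c = V_cleared[OF S V, folded D_def]
  note m = V_cleared_sums[OF S V, folded D_def]
  have a: "x + y \<ge> 49/100" "u + v \<ge> 49/100" using assms h by linarith+
  have "(49/100) * (49/100) \<le> (x+y) * (u+v)" by (rule mult_mono) (use a in auto)
  then have D: "2 \<le> D" unfolding D_def by linarith
  have "(y' + v') * 2 \<le> (y' + v') * D" by (rule mult_left_mono) (use c(3,5) D in auto)
  also have "\<dots> = 6 * x * v + 6 * y * u + 8 * y * v" by (rule m(3))
  also have "\<dots> \<le> 8 * (v * (x + y)) + 8 * (y * (u + v))" using h by (simp add: algebra_simps)
  also have "\<dots> \<le> 8 * (v * 1) + 8 * (y * 1)"
    by (intro add_mono mult_left_mono) (use h in linarith)+
  finally have "y' + v' \<le> 1/12" using assms by simp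
  moreover have "8 * v \<le> 3 * u" using assms h by linarith
  ultimately show ?thesis unfolding V using V_in_trap[OF S V] by blast
qed

lemma orbit_tendsto_near_fixed_point:
  fixes x y u v :: real
  assumes "(x,y,u,v) \<in> S22" and "y + v < 1/100" and "\<bar>x + y - 1/2\<bar> < 1/100"
  shows "(\<lambda>n. (V ^^ n) (x,y,u,v)) \<longlonglongrightarrow> (1/2, 0, 1/2, 0)"
proof -
  have "(\<lambda>n. (V ^^ n) (V (x,y,u,v))) \<longlonglongrightarrow> (1/2, 0, 1/2, 0)"
    using V_near_fixed_point_in_trap[OF assms] by (rule trap_orbit_tendsto)
  then have "(\<lambda>n. (V ^^ Suc n) (x,y,u,v)) \<longlonglongrightarrow> (1/2, 0, 1/2, 0)"
    by (simp add: funpow_Suc_right del: funpow.simps)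
  then show ?thesis by (rule LIMSEQ_imp_Suc[where f = "\<lambda>n. (V ^^ n) (x,y,u,v)"])
qed

theorem theorem4p1:
  shows "{s \<in> S22. V s = s} = {(1/2, 0, 1/2, 0)} \<and>
         (\<exists>U. openin (top_of_set S22) U \<and> (1/2, 0, 1/2, 0) \<in> U \<and>
              (\<forall>s\<in>U. (\<lambda>n. (V ^^ n) s) \<longlonglongrightarrow> (1/2, 0, 1/2, 0)))"
proof (intro conjI)
  have p: "((1/2, 0, 1/2, 0) :: pt4) \<in> S22" "V (1/2, 0, 1/2, 0) = (1/2, 0, 1/2, 0)"
    by (simp_all add: S22_def V_def)
  then show "{s \<in> S22. V s = s} = {(1/2, 0, 1/2, 0)}"
    using V_fixed_point_unique by blast
  define N where "N = {s :: pt4. fst (snd s) + snd (snd (snd s)) < 1/100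
                                 \<and> \<bar>fst s + fst (snd s) - 1/2\<bar> < 1/100}"
  have "open N" unfolding N_def
    by (intro open_Collect_conj open_Collect_less continuous_intros)
  then have "openin (top_of_set S22) (S22 \<inter> N)" by (rule openin_open_Int)
  moreover have "(\<lambda>n. (V ^^ n) s) \<longlonglongrightarrow> (1/2, 0, 1/2, 0)" if "s \<in> S22 \<inter> N" for s
    using that orbit_tendsto_near_fixed_point unfolding N_def by (cases s) auto
  moreover have "(1/2, 0, 1/2, 0) \<in> S22 \<inter> N" using p by (simp add: N_def)
  ultimately show "\<exists>U. openin (top_of_set S22) U \<and> (1/2, 0, 1/2, 0) \<in> U \<and>
              (\<forall>s\<in>U. (\<lambda>n. (V ^^ n) s) \<longlonglongrightarrow> (1/2, 0, 1/2, 0))" by blast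
qed

end
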